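(* Let $n\ge 2$, $k\ge0$, $\nu_1,\ldots,\nu_n>0$, and let $(j_1,\ldots,j_{n-1})$ be nonnegative integers with $\sum_{\ell=1}^{n-1}j_\ell=k$. Let \[ \psi_{j_1,\ldots,j_{n-1}} = CK_{n}\Big( \big(K_+^{[n-1]}\big)^{j_{n-1}} CK_{n-1}\Big( \cdots \big(K_+^{[3]}\big)^{j_3} CK_{3}\Big( \big(K_+^{[2]}\big)^{j_2} CK_{2}\big( x_1^{j_1}\big)\Big)\cdots\Big)\Big). \] Then for every $\ell\in\{2,\ldots,n\}$, \[ C_{[\ell]}\,\psi_{j_1,\ldots,j_{n-1}}=\lambda^{[\ell]}_{j_1,\ldots,j_{n-1}}\,\psi_{j_1,\ldots,j_{n-1}},\qquad \lambda^{[\ell]}_{j_1,\ldots,j_{n-1}}=\Big(\sum_{i=1}^{\ell-1}j_i+\sum_{i=1}^{\ell}\nu_i\Big)\Big(-1+\sum_{i=1}^{\ell-1}j_i+\sum_{i=1}^{\ell}\nu_i\Big). \]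
   Context: For a subset $B\subset[n]=\{1,\ldots,n\}$ define the differential operators on $\mathbb{R}[x_1,\ldots,x_n]$: $K_-^B=\sum_{j\in B}\partial_{x_j}$, $K_+^B=\sum_{j\in B}(x_j^2\partial_{x_j}+2\nu_jx_j)$, $K_0^B=\sum_{j\in B}x_j\partial_{x_j}+\sum_{j\in B}\nu_j$, and $C_B=(K_0^B)^2-K_0^B-K_+^BK_-^B$. Write $[m]=\{1,\ldots,m\}$. For $2\le m\le n$, $CK_m$ sends a polynomial $p(x_1,\ldots,x_{m-1})$ to $p(x_1-x_m,\ldots,x_{m-1}-x_m)$; $K_+^{[m]}$ acts on polynomials in $x_1,\ldots,x_m$. The resulting $\psi$ is regarded as a polynomial in $x_1,\ldots,x_n$. *)

theory Defs
  imports "HOL-Analysis.Analysis"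
begin

text \<open>Polynomials in x_1,...,x_n are represented by their polynomial functions
  (nat => real) => real (only coordinates 1..n matter).  Over the reals, equality
  of polynomials is equality of the associated functions.\<close>

type_synonym pfun = "(nat \<Rightarrow> real) \<Rightarrow> real"

definition pd :: "nat \<Rightarrow> pfun \<Rightarrow> pfun" where
  "pd j f = (\<lambda>x. deriv (\<lambda>t. f (x(j := t))) (x j))"

definition Kminus :: "nat set \<Rightarrow> pfun \<Rightarrow> pfun" where
  "Kminus B f = (\<lambda>x. \<Sum>j\<in>B. pd j f x)"

definition Kplus :: "(nat \<Rightarrow> real) \<Rightarrow> nat set \<Rightarrow> pfun \<Rightarrow> pfun" where
  "Kplus \<nu> B f = (\<lambda>x. \<Sum>j\<in>B. (x j)^2 * pd j f x + 2 * \<nu> j * x j * f x)"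

definition K0 :: "(nat \<Rightarrow> real) \<Rightarrow> nat set \<Rightarrow> pfun \<Rightarrow> pfun" where
  "K0 \<nu> B f = (\<lambda>x. (\<Sum>j\<in>B. x j * pd j f x) + (\<Sum>j\<in>B. \<nu> j) * f x)"

definition Cas :: "(nat \<Rightarrow> real) \<Rightarrow> nat set \<Rightarrow> pfun \<Rightarrow> pfun" where
  "Cas \<nu> B f = (\<lambda>x. K0 \<nu> B (K0 \<nu> B f) x - K0 \<nu> B f x - Kplus \<nu> B (Kminus B f) x)"

definition CK :: "nat \<Rightarrow> pfun \<Rightarrow> pfun" where
  "CK m p = (\<lambda>x. p (\<lambda>i. if 1 \<le> i \<and> i \<le> m - 1 then x i - x m else x i))"

text \<open>psiS nu j r is the nested expression ending with CK_(r+2); psi = psiS nu j (n-2).\<close>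
primrec psiS :: "(nat \<Rightarrow> real) \<Rightarrow> (nat \<Rightarrow> nat) \<Rightarrow> nat \<Rightarrow> pfun" where
  "psiS \<nu> j 0 = CK 2 (\<lambda>x. (x 1) ^ (j 1))"
| "psiS \<nu> j (Suc r) = CK (r + 3) ((Kplus \<nu> {1..r+2} ^^ (j (r+2))) (psiS \<nu> j r))"

end

theory Submission
  imports Defs
begin

(* For B \<subseteq> B' the operators K_-^B, K_0^B, K_+^B' satisfy the sl_2 relations
   [K_0^B, K_+^B'] = K_+^B, [K_-^B, K_+^B'] = 2 K_0^B, [K_-^B, K_0^B] = K_-^B, and the K_+ commute,
   so C_B commutes with K_+^B'.  For B \<subseteq> [m-1] the substitution CK_m also commutes with C_B:
   it intertwines the operators up to multiples of x_m K_-^B, which cancel in C_B.  Moreover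
   K_-^[m] (CK_m q) = CK_m (\<partial>_m q), so if q does not depend on x_m then CK_m q is a lowest weight
   vector, on which C_[m] acts as c (c - 1) with c its K_0^[m]-eigenvalue; each application of
   K_+^[m] raises that eigenvalue by one.  Induction along the nesting of psi then yields all
   eigenvalues: the one for [l] is created at CK_l and preserved by every later K_+ and CK. *)

section \<open>Polynomial functions and partial derivatives\<close>

(* pd is defined through deriv and is only a derivation on differentiable functions,
   hence the restriction to polynomial functions. *)
inductive_set polyfun :: "pfun set" where
  const: "(\<lambda>x. c) \<in> polyfun"
| var: "(\<lambda>x. x i) \<in> polyfun"
| add: "f \<in> polyfun \<Longrightarrow> g \<in> polyfun \<Longrightarrow> (\<lambda>x. f x + g x) \<in> polyfun"
| diff: "f \<in> polyfun \<Longrightarrow> g \<in> polyfun \<Longrightarrow> (\<lambda>x. f x - g x) \<in> polyfun"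
| mult: "f \<in> polyfun \<Longrightarrow> g \<in> polyfun \<Longrightarrow> (\<lambda>x. f x * g x) \<in> polyfun"

declare polyfun.intros [simp, intro]

lemma polyfun_field_differentiable:
  "f \<in> polyfun \<Longrightarrow> (\<lambda>t. f (x(j := t))) field_differentiable (at t)"
proof (induction f rule: polyfun.induct)
  case (var i)
  then show ?case by (cases "i = j") auto
qed (auto intro!: derivative_intros)

lemma pd_const [simp]: "pd j (\<lambda>x. c) = (\<lambda>x. 0)"
  by (simp add: pd_def)

lemma pd_var [simp]: "pd j (\<lambda>x. x i) = (\<lambda>x. if i = j then 1 else 0)"
  by (cases "i = j") (auto simp: pd_def)

lemma pd_add [simp]:
  "f \<in> polyfun \<Longrightarrow> g \<in> polyfun \<Longrightarrow> pd j (\<lambda>x. f x + g x) = (\<lambda>x. pd j f x + pd j g x)"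
  unfolding pd_def by (rule ext) (simp add: polyfun_field_differentiable)

lemma pd_diff [simp]:
  "f \<in> polyfun \<Longrightarrow> g \<in> polyfun \<Longrightarrow> pd j (\<lambda>x. f x - g x) = (\<lambda>x. pd j f x - pd j g x)"
  unfolding pd_def by (rule ext) (simp add: polyfun_field_differentiable)

lemma pd_mult [simp]:
  "f \<in> polyfun \<Longrightarrow> g \<in> polyfun \<Longrightarrow>
    pd j (\<lambda>x. f x * g x) = (\<lambda>x. pd j f x * g x + f x * pd j g x)"
  unfolding pd_def by (rule ext) (simp add: polyfun_field_differentiable)

lemma polyfun_pd [simp, intro]: "f \<in> polyfun \<Longrightarrow> pd j f \<in> polyfun"
  by (induction f rule: polyfun.induct) auto

lemma pd_commute: "f \<in> polyfun \<Longrightarrow> pd i (pd j f) = pd j (pd i f)"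
  by (induction f rule: polyfun.induct) (auto simp: algebra_simps)

lemma polyfun_sum [simp, intro]:
  "(\<And>k. k \<in> S \<Longrightarrow> F k \<in> polyfun) \<Longrightarrow> (\<lambda>x. \<Sum>k\<in>S. F k x) \<in> polyfun"
proof (induction S rule: infinite_finite_induct)
  case (insert a S)
  then have "(\<lambda>x. F a x + (\<Sum>k\<in>S. F k x)) \<in> polyfun" by (intro polyfun.add) auto
  with insert show ?case by simp
qed auto

lemma pd_sum [simp]:
  "(\<And>k. k \<in> S \<Longrightarrow> F k \<in> polyfun) \<Longrightarrow>
    pd j (\<lambda>x. \<Sum>k\<in>S. F k x) = (\<lambda>x. \<Sum>k\<in>S. pd j (F k) x)"
proof (induction S rule: infinite_finite_induct)
  case (insert a S)
  then have "pd j (\<lambda>x. F a x + (\<Sum>k\<in>S. F k x)) = (\<lambda>x. pd j (F a) x + pd j (\<lambda>x. \<Sum>k\<in>S. F k x) x)"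
    by (intro pd_add) auto
  with insert show ?case by simp
qed auto

lemma polyfun_power [simp, intro]: "f \<in> polyfun \<Longrightarrow> (\<lambda>x. f x ^ n) \<in> polyfun"
proof (induction n)
  case (Suc n)
  then have "(\<lambda>x. f x * f x ^ n) \<in> polyfun" by (intro polyfun.mult)
  then show ?case by simp
qed simp

lemma pd_power:
  assumes "f \<in> polyfun"
  shows "pd j (\<lambda>x. f x ^ n) = (\<lambda>x. real n * f x ^ (n - 1) * pd j f x)"
proof (induction n)
  case (Suc n)
  have "pd j (\<lambda>x. f x ^ Suc n) = (\<lambda>x. pd j f x * f x ^ n + f x * pd j (\<lambda>x. f x ^ n) x)"
    using pd_mult[of f "\<lambda>x. f x ^ n" j] assms by simp
  also have "\<dots> = (\<lambda>x. real (Suc n) * f x ^ (Suc n - 1) * pd j f x)"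
    unfolding Suc by (cases n) (auto simp: algebra_simps)
  finally show ?case .
qed simp

definition kplus_at :: "(nat \<Rightarrow> real) \<Rightarrow> nat \<Rightarrow> pfun \<Rightarrow> pfun" where
  "kplus_at \<nu> j f = (\<lambda>x. (x j)^2 * pd j f x + 2 * \<nu> j * x j * f x)"

definition euler_at :: "nat \<Rightarrow> pfun \<Rightarrow> pfun" where
  "euler_at j f = (\<lambda>x. x j * pd j f x)"

lemma Kplus_eq_sum_kplus_at: "Kplus \<nu> B f = (\<lambda>x. \<Sum>j\<in>B. kplus_at \<nu> j f x)"
  by (simp add: Kplus_def kplus_at_def)

lemma K0_eq_sum_euler_at: "K0 \<nu> B f = (\<lambda>x. (\<Sum>j\<in>B. euler_at j f x) + (\<Sum>j\<in>B. \<nu> j) * f x)"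
  by (simp add: K0_def euler_at_def)

lemma polyfun_kplus_at [simp, intro]: "f \<in> polyfun \<Longrightarrow> kplus_at \<nu> j f \<in> polyfun"
  unfolding kplus_at_def by (intro polyfun.intros polyfun_power polyfun_pd) auto

lemma polyfun_euler_at [simp, intro]: "f \<in> polyfun \<Longrightarrow> euler_at j f \<in> polyfun"
  unfolding euler_at_def by auto

lemma polyfun_Kplus [simp, intro]: "f \<in> polyfun \<Longrightarrow> Kplus \<nu> B f \<in> polyfun"
  unfolding Kplus_eq_sum_kplus_at by auto

lemma polyfun_K0 [simp, intro]: "f \<in> polyfun \<Longrightarrow> K0 \<nu> B f \<in> polyfun"
  unfolding K0_eq_sum_euler_at by (intro polyfun.intros polyfun_sum) auto

lemma polyfun_Kminus [simp, intro]: "f \<in> polyfun \<Longrightarrow> Kminus B f \<in> polyfun"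
  unfolding Kminus_def by auto

lemma polyfun_Kplus_power [simp, intro]: "f \<in> polyfun \<Longrightarrow> (Kplus \<nu> B ^^ n) f \<in> polyfun"
  by (induction n) auto

lemma pd_kplus_at:
  "f \<in> polyfun \<Longrightarrow> pd i (kplus_at \<nu> j f) =
    (\<lambda>x. kplus_at \<nu> j (pd i f) x + (if i = j then 2 * x j * pd j f x + 2 * \<nu> j * f x else 0))"
  unfolding kplus_at_def by (rule ext) (auto simp: pd_commute pd_power algebra_simps)

lemma euler_at_kplus_at:
  "f \<in> polyfun \<Longrightarrow> euler_at i (kplus_at \<nu> j f) =
    (\<lambda>x. kplus_at \<nu> j (euler_at i f) x + (if i = j then kplus_at \<nu> j f x else 0))"
  unfolding kplus_at_def euler_at_def
  by (rule ext) (auto simp: pd_commute pd_power algebra_simps power2_eq_square)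

lemma kplus_at_commute:
  "f \<in> polyfun \<Longrightarrow> kplus_at \<nu> i (kplus_at \<nu> j f) = kplus_at \<nu> j (kplus_at \<nu> i f)"
  unfolding kplus_at_def by (rule ext) (auto simp: pd_commute pd_power algebra_simps power2_eq_square)

lemma pd_euler_at:
  "f \<in> polyfun \<Longrightarrow> pd i (euler_at j f) = (\<lambda>x. euler_at j (pd i f) x + (if i = j then pd j f x else 0))"
  unfolding euler_at_def by (rule ext) (auto simp: pd_commute algebra_simps)

lemma kplus_at_add [simp]:
  "f \<in> polyfun \<Longrightarrow> g \<in> polyfun \<Longrightarrow>
    kplus_at \<nu> j (\<lambda>x. f x + g x) = (\<lambda>x. kplus_at \<nu> j f x + kplus_at \<nu> j g x)"
  unfolding kplus_at_def by (rule ext) (simp add: algebra_simps)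

lemma kplus_at_diff [simp]:
  "f \<in> polyfun \<Longrightarrow> g \<in> polyfun \<Longrightarrow>
    kplus_at \<nu> j (\<lambda>x. f x - g x) = (\<lambda>x. kplus_at \<nu> j f x - kplus_at \<nu> j g x)"
  unfolding kplus_at_def by (rule ext) (simp add: algebra_simps)

lemma kplus_at_cmult [simp]:
  "f \<in> polyfun \<Longrightarrow> kplus_at \<nu> j (\<lambda>x. c * f x) = (\<lambda>x. c * kplus_at \<nu> j f x)"
  unfolding kplus_at_def by (rule ext) (simp add: algebra_simps)

lemma kplus_at_zero [simp]: "kplus_at \<nu> j (\<lambda>x. 0) = (\<lambda>x. 0)"
  unfolding kplus_at_def by simp

lemma kplus_at_sum [simp]:
  "(\<And>k. k \<in> S \<Longrightarrow> F k \<in> polyfun) \<Longrightarrow>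
    kplus_at \<nu> j (\<lambda>x. \<Sum>k\<in>S. F k x) = (\<lambda>x. \<Sum>k\<in>S. kplus_at \<nu> j (F k) x)"
  unfolding kplus_at_def by (rule ext) (simp add: algebra_simps sum_distrib_left sum.distrib)

lemma euler_at_add [simp]:
  "f \<in> polyfun \<Longrightarrow> g \<in> polyfun \<Longrightarrow>
    euler_at j (\<lambda>x. f x + g x) = (\<lambda>x. euler_at j f x + euler_at j g x)"
  unfolding euler_at_def by (rule ext) (simp add: algebra_simps)

lemma euler_at_diff [simp]:
  "f \<in> polyfun \<Longrightarrow> g \<in> polyfun \<Longrightarrow>
    euler_at j (\<lambda>x. f x - g x) = (\<lambda>x. euler_at j f x - euler_at j g x)"
  unfolding euler_at_def by (rule ext) (simp add: algebra_simps)

lemma euler_at_cmult [simp]: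
  "f \<in> polyfun \<Longrightarrow> euler_at j (\<lambda>x. c * f x) = (\<lambda>x. c * euler_at j f x)"
  unfolding euler_at_def by (rule ext) (simp add: algebra_simps)

lemma euler_at_sum [simp]:
  "(\<And>k. k \<in> S \<Longrightarrow> F k \<in> polyfun) \<Longrightarrow>
    euler_at j (\<lambda>x. \<Sum>k\<in>S. F k x) = (\<lambda>x. \<Sum>k\<in>S. euler_at j (F k) x)"
  unfolding euler_at_def by (rule ext) (simp add: sum_distrib_left)

lemma Kplus_add [simp]:
  "f \<in> polyfun \<Longrightarrow> g \<in> polyfun \<Longrightarrow>
    Kplus \<nu> B (\<lambda>x. f x + g x) = (\<lambda>x. Kplus \<nu> B f x + Kplus \<nu> B g x)"
  unfolding Kplus_eq_sum_kplus_at by (simp add: sum.distrib)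

lemma Kplus_diff [simp]:
  "f \<in> polyfun \<Longrightarrow> g \<in> polyfun \<Longrightarrow>
    Kplus \<nu> B (\<lambda>x. f x - g x) = (\<lambda>x. Kplus \<nu> B f x - Kplus \<nu> B g x)"
  unfolding Kplus_eq_sum_kplus_at by (simp add: sum_subtractf)

lemma Kplus_cmult [simp]:
  "f \<in> polyfun \<Longrightarrow> Kplus \<nu> B (\<lambda>x. c * f x) = (\<lambda>x. c * Kplus \<nu> B f x)"
  unfolding Kplus_eq_sum_kplus_at by (simp add: sum_distrib_left)

lemma Kplus_zero [simp]: "Kplus \<nu> B (\<lambda>x. 0) = (\<lambda>x. 0)"
  unfolding Kplus_eq_sum_kplus_at by simp

lemma K0_add [simp]:
  "f \<in> polyfun \<Longrightarrow> g \<in> polyfun \<Longrightarrow>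
    K0 \<nu> B (\<lambda>x. f x + g x) = (\<lambda>x. K0 \<nu> B f x + K0 \<nu> B g x)"
  unfolding K0_eq_sum_euler_at by (rule ext) (simp add: algebra_simps sum.distrib)

lemma K0_cmult [simp]:
  "f \<in> polyfun \<Longrightarrow> K0 \<nu> B (\<lambda>x. c * f x) = (\<lambda>x. c * K0 \<nu> B f x)"
  unfolding K0_eq_sum_euler_at by (rule ext) (simp add: algebra_simps sum_distrib_left)

section \<open>The sl_2 relations\<close>

lemma sum_if_mem_subset:
  "B \<subseteq> B' \<Longrightarrow> (\<Sum>i\<in>B. if i \<in> B' then g i else 0) = (\<Sum>i\<in>B. g i :: real)"
  by (auto intro!: sum.cong)

lemma K0_Kplus:
  assumes "f \<in> polyfun" "finite B" "finite B'" "B \<subseteq> B'"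
  shows "K0 \<nu> B (Kplus \<nu> B' f) = (\<lambda>x. Kplus \<nu> B' (K0 \<nu> B f) x + Kplus \<nu> B f x)"
proof
  fix x
  have "K0 \<nu> B (Kplus \<nu> B' f) x =
      (\<Sum>i\<in>B. \<Sum>j\<in>B'. kplus_at \<nu> j (euler_at i f) x + (if i = j then kplus_at \<nu> j f x else 0))
      + (\<Sum>j\<in>B. \<nu> j) * (\<Sum>j\<in>B'. kplus_at \<nu> j f x)"
    using assms by (simp add: K0_eq_sum_euler_at Kplus_eq_sum_kplus_at euler_at_kplus_at)
  also have "\<dots> = (\<Sum>j\<in>B'. \<Sum>i\<in>B. kplus_at \<nu> j (euler_at i f) x)
      + (\<Sum>j\<in>B. \<nu> j) * (\<Sum>j\<in>B'. kplus_at \<nu> j f x) + (\<Sum>j\<in>B. kplus_at \<nu> j f x)"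
    using assms by (simp add: sum.distrib sum_if_mem_subset sum.swap[where A = B])
  also have "\<dots> = Kplus \<nu> B' (K0 \<nu> B f) x + Kplus \<nu> B f x"
    using assms by (simp add: K0_eq_sum_euler_at Kplus_eq_sum_kplus_at sum.distrib sum_distrib_left)
  finally show "K0 \<nu> B (Kplus \<nu> B' f) x = Kplus \<nu> B' (K0 \<nu> B f) x + Kplus \<nu> B f x" .
qed

lemma Kminus_Kplus:
  assumes "f \<in> polyfun" "finite B" "finite B'" "B \<subseteq> B'"
  shows "Kminus B (Kplus \<nu> B' f) = (\<lambda>x. Kplus \<nu> B' (Kminus B f) x + 2 * K0 \<nu> B f x)"
proof
  fix x
  have "Kminus B (Kplus \<nu> B' f) x = (\<Sum>i\<in>B. \<Sum>j\<in>B'. kplus_at \<nu> j (pd i f) x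
      + (if i = j then 2 * x j * pd j f x + 2 * \<nu> j * f x else 0))"
    using assms by (simp add: Kminus_def Kplus_eq_sum_kplus_at pd_kplus_at)
  also have "\<dots> = (\<Sum>j\<in>B'. \<Sum>i\<in>B. kplus_at \<nu> j (pd i f) x)
      + (\<Sum>j\<in>B. 2 * x j * pd j f x + 2 * \<nu> j * f x)"
    using assms by (simp add: sum.distrib sum_if_mem_subset sum.swap[where A = B])
  also have "\<dots> = Kplus \<nu> B' (Kminus B f) x + 2 * K0 \<nu> B f x"
    using assms by (simp add: K0_def Kminus_def Kplus_eq_sum_kplus_at sum.distrib
        sum_distrib_left sum_distrib_right mult.assoc)
  finally show "Kminus B (Kplus \<nu> B' f) x = Kplus \<nu> B' (Kminus B f) x + 2 * K0 \<nu> B f x" .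
qed

lemma Kplus_commute:
  assumes "f \<in> polyfun"
  shows "Kplus \<nu> B (Kplus \<nu> B' f) = Kplus \<nu> B' (Kplus \<nu> B f)"
proof
  fix x
  have "Kplus \<nu> B (Kplus \<nu> B' f) x = (\<Sum>i\<in>B. \<Sum>j\<in>B'. kplus_at \<nu> i (kplus_at \<nu> j f) x)"
    using assms by (simp add: Kplus_eq_sum_kplus_at)
  also have "\<dots> = (\<Sum>j\<in>B'. \<Sum>i\<in>B. kplus_at \<nu> j (kplus_at \<nu> i f) x)"
    by (subst sum.swap) (simp only: kplus_at_commute[OF assms])
  also have "\<dots> = Kplus \<nu> B' (Kplus \<nu> B f) x"
    using assms by (simp add: Kplus_eq_sum_kplus_at)
  finally show "Kplus \<nu> B (Kplus \<nu> B' f) x = Kplus \<nu> B' (Kplus \<nu> B f) x" .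
qed

lemma Kminus_K0:
  assumes "f \<in> polyfun" "finite B"
  shows "Kminus B (K0 \<nu> B f) = (\<lambda>x. K0 \<nu> B (Kminus B f) x + Kminus B f x)"
proof
  fix x
  have "Kminus B (K0 \<nu> B f) x = (\<Sum>i\<in>B. (\<Sum>j\<in>B. euler_at j (pd i f) x
      + (if i = j then pd j f x else 0)) + (\<Sum>j\<in>B. \<nu> j) * pd i f x)"
    using assms by (simp add: Kminus_def K0_eq_sum_euler_at pd_euler_at)
  also have "\<dots> = (\<Sum>j\<in>B. \<Sum>i\<in>B. euler_at j (pd i f) x)
      + (\<Sum>j\<in>B. \<nu> j) * (\<Sum>i\<in>B. pd i f x) + (\<Sum>j\<in>B. pd j f x)"
    using assms by (simp add: sum.distrib sum_distrib_left) (rule sum.swap)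
  also have "\<dots> = K0 \<nu> B (Kminus B f) x + Kminus B f x"
    using assms by (simp add: K0_eq_sum_euler_at Kminus_def)
  finally show "Kminus B (K0 \<nu> B f) x = K0 \<nu> B (Kminus B f) x + Kminus B f x" .
qed

lemma Cas_Kplus:
  assumes "f \<in> polyfun" "finite B" "finite B'" "B \<subseteq> B'"
  shows "Cas \<nu> B (Kplus \<nu> B' f) = Kplus \<nu> B' (Cas \<nu> B f)"
  using assms by (simp add: Cas_def K0_Kplus Kminus_Kplus Kplus_commute algebra_simps)

lemma Cas_lowest_weight:
  assumes "f \<in> polyfun" "Kminus B f = (\<lambda>x. 0)" "K0 \<nu> B f = (\<lambda>x. c * f x)"
  shows "Cas \<nu> B f = (\<lambda>x. c * (c - 1) * f x)"
  using assms by (simp add: Cas_def algebra_simps)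

lemma pd_Kplus_outside:
  assumes "f \<in> polyfun" "p \<notin> B"
  shows "pd p (Kplus \<nu> B f) = Kplus \<nu> B (pd p f)"
  using assms by (auto simp: Kplus_eq_sum_kplus_at pd_kplus_at intro!: ext sum.cong)

lemma pd_Kplus_power_outside:
  assumes "f \<in> polyfun" "p \<notin> B" "pd p f = (\<lambda>x. 0)"
  shows "pd p ((Kplus \<nu> B ^^ n) f) = (\<lambda>x. 0)"
  by (induction n) (simp_all add: assms pd_Kplus_outside)

lemma K0_Kplus_power:
  assumes "f \<in> polyfun" "finite B" "K0 \<nu> B f = (\<lambda>x. c * f x)"
  shows "K0 \<nu> B ((Kplus \<nu> B ^^ n) f) = (\<lambda>x. (c + real n) * (Kplus \<nu> B ^^ n) f x)"
proof (induction n)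
  case (Suc n)
  let ?g = "(Kplus \<nu> B ^^ n) f"
  have "K0 \<nu> B ((Kplus \<nu> B ^^ Suc n) f) = (\<lambda>x. Kplus \<nu> B (K0 \<nu> B ?g) x + Kplus \<nu> B ?g x)"
    using assms by (simp add: K0_Kplus)
  also have "\<dots> = (\<lambda>x. (c + real (Suc n)) * (Kplus \<nu> B ^^ Suc n) f x)"
    unfolding Suc using assms by (simp add: algebra_simps)
  finally show ?case .
qed (simp add: assms)

lemma Cas_Kplus_power:
  assumes "f \<in> polyfun" "finite B'" "B \<subseteq> B'" "Cas \<nu> B f = (\<lambda>x. c * f x)"
  shows "Cas \<nu> B ((Kplus \<nu> B' ^^ n) f) = (\<lambda>x. c * (Kplus \<nu> B' ^^ n) f x)"
proof (induction n)
  case (Suc n)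
  have "finite B" using assms finite_subset by blast
  with assms show ?case by (simp add: Cas_Kplus Suc)
qed (simp add: assms)

section \<open>The substitution CK\<close>

lemma CK_add [simp]: "CK m (\<lambda>x. f x + g x) = (\<lambda>x. CK m f x + CK m g x)"
  by (simp add: CK_def)

lemma CK_diff [simp]: "CK m (\<lambda>x. f x - g x) = (\<lambda>x. CK m f x - CK m g x)"
  by (simp add: CK_def)

lemma CK_mult [simp]: "CK m (\<lambda>x. f x * g x) = (\<lambda>x. CK m f x * CK m g x)"
  by (simp add: CK_def)

lemma CK_const [simp]: "CK m (\<lambda>x. c) = (\<lambda>x. c)"
  by (simp add: CK_def)

lemma CK_sum [simp]: "CK m (\<lambda>x. \<Sum>k\<in>S. F k x) = (\<lambda>x. \<Sum>k\<in>S. CK m (F k) x)"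
  by (simp add: CK_def)

lemma CK_var:
  "CK m (\<lambda>x. x i) = (if 1 \<le> i \<and> i \<le> m - 1 then (\<lambda>x. x i - x m) else (\<lambda>x. x i))"
  by (auto simp: CK_def)

lemma polyfun_CK [simp, intro]: "f \<in> polyfun \<Longrightarrow> CK m f \<in> polyfun"
  by (induction f rule: polyfun.induct) (auto simp: CK_var)

lemma pd_CK:
  "f \<in> polyfun \<Longrightarrow> pd p (CK m f) =
    (\<lambda>x. CK m (pd p f) x - (if p = m then \<Sum>i\<in>{1..m-1}. CK m (pd i f) x else 0))"
proof (induction f rule: polyfun.induct)
  case (var i)
  then show ?case by (cases "1 \<le> i \<and> i \<le> m - 1") (auto simp: CK_var sum.delta)
next
  case (mult f g)
  then show ?case
    by (auto simp: algebra_simps sum_distrib_left sum_subtractf sum.distrib intro!: ext)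
qed (auto simp: sum_subtractf sum.distrib intro!: ext)

lemma pd_CK_other: "f \<in> polyfun \<Longrightarrow> p \<noteq> m \<Longrightarrow> pd p (CK m f) = CK m (pd p f)"
  by (simp add: pd_CK)

lemma Kminus_CK:
  assumes "q \<in> polyfun" "B \<subseteq> {1..m-1}"
  shows "Kminus B (CK m q) = CK m (Kminus B q)"
proof -
  have "\<And>i. i \<in> B \<Longrightarrow> i \<noteq> m" using assms by force
  with assms show ?thesis
    unfolding Kminus_def by (auto simp: pd_CK_other intro!: ext sum.cong)
qed

lemma K0_CK:
  assumes "q \<in> polyfun" "B \<subseteq> {1..m-1}"
  shows "K0 \<nu> B (CK m q) = (\<lambda>x. CK m (K0 \<nu> B q) x + x m * CK m (Kminus B q) x)"
proof
  fix x
  have B: "\<And>i. i \<in> B \<Longrightarrow> i \<noteq> m \<and> 1 \<le> i \<and> i \<le> m - 1" using assms by force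
  have "K0 \<nu> B (CK m q) x = (\<Sum>i\<in>B. x i * CK m (pd i q) x) + (\<Sum>j\<in>B. \<nu> j) * CK m q x"
    using B assms by (simp add: K0_def pd_CK_other)
  also have "\<dots> = (\<Sum>i\<in>B. (x i - x m) * CK m (pd i q) x) + (\<Sum>j\<in>B. \<nu> j) * CK m q x
      + x m * (\<Sum>i\<in>B. CK m (pd i q) x)"
    by (simp add: algebra_simps sum.distrib sum_distrib_left sum_subtractf)
  also have "\<dots> = CK m (K0 \<nu> B q) x + x m * CK m (Kminus B q) x"
    using B assms by (simp add: K0_def Kminus_def CK_var cong: sum.cong)
  finally show "K0 \<nu> B (CK m q) x = CK m (K0 \<nu> B q) x + x m * CK m (Kminus B q) x" .
qed

lemma Kplus_CK:
  assumes "q \<in> polyfun" "B \<subseteq> {1..m-1}"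
  shows "Kplus \<nu> B (CK m q) = (\<lambda>x. CK m (Kplus \<nu> B q) x + 2 * x m * CK m (K0 \<nu> B q) x
      + (x m)^2 * CK m (Kminus B q) x)"
proof
  fix x
  have B: "\<And>i. i \<in> B \<Longrightarrow> i \<noteq> m \<and> 1 \<le> i \<and> i \<le> m - 1" using assms by force
  have "Kplus \<nu> B (CK m q) x = (\<Sum>i\<in>B. (x i)^2 * CK m (pd i q) x + 2 * \<nu> i * x i * CK m q x)"
    using B assms by (simp add: Kplus_def pd_CK_other)
  also have "\<dots> = (\<Sum>i\<in>B. (x i - x m)^2 * CK m (pd i q) x + 2 * \<nu> i * (x i - x m) * CK m q x)
      + 2 * x m * ((\<Sum>i\<in>B. (x i - x m) * CK m (pd i q) x) + (\<Sum>j\<in>B. \<nu> j) * CK m q x)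
      + (x m)^2 * (\<Sum>i\<in>B. CK m (pd i q) x)"
    by (simp add: algebra_simps power2_eq_square sum.distrib sum_distrib_left sum_distrib_right
        sum_subtractf)
  also have "\<dots> = CK m (Kplus \<nu> B q) x + 2 * x m * CK m (K0 \<nu> B q) x + (x m)^2 * CK m (Kminus B q) x"
    using B assms by (simp add: K0_def Kminus_def Kplus_def CK_var power2_eq_square cong: sum.cong)
  finally show "Kplus \<nu> B (CK m q) x = CK m (Kplus \<nu> B q) x + 2 * x m * CK m (K0 \<nu> B q) x
      + (x m)^2 * CK m (Kminus B q) x" .
qed

lemma K0_mult_var_outside:
  assumes "h \<in> polyfun" "m \<notin> B"
  shows "K0 \<nu> B (\<lambda>x. x m * h x) = (\<lambda>x. x m * K0 \<nu> B h x)"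
proof -
  have "\<And>i. i \<in> B \<Longrightarrow> m \<noteq> i" using assms by auto
  with assms show ?thesis
    unfolding K0_def by (auto simp: algebra_simps sum_distrib_left intro!: ext sum.cong)
qed

lemma Cas_CK:
  assumes "q \<in> polyfun" "finite B" "B \<subseteq> {1..m-1}"
  shows "Cas \<nu> B (CK m q) = CK m (Cas \<nu> B q)"
proof -
  have "m \<notin> B" using assms by force
  with assms show ?thesis
    by (simp add: Cas_def Kminus_CK K0_CK Kplus_CK K0_mult_var_outside Kminus_K0
        algebra_simps power2_eq_square)
qed

lemma Kminus_CK_top:
  assumes "q \<in> polyfun" "m \<ge> 1"
  shows "Kminus {1..m} (CK m q) = CK m (pd m q)"
proof -
  have "{1..m} = insert m {1..m-1}" "m \<notin> {1..m-1}" using assms by auto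
  moreover have "pd i (CK m q) = CK m (pd i q)" if "i \<in> {1..m-1}" for i
    using that assms by (intro pd_CK_other) auto
  ultimately show ?thesis
    using assms by (simp add: Kminus_def pd_CK)
qed

lemma K0_CK_top:
  assumes "q \<in> polyfun" "m \<ge> 1"
  shows "K0 \<nu> {1..m} (CK m q) =
    (\<lambda>x. CK m (K0 \<nu> {1..m-1} q) x + x m * CK m (pd m q) x + \<nu> m * CK m q x)"
proof
  fix x
  have top: "{1..m} = insert m {1..m-1}" "m \<notin> {1..m-1}" using assms by auto
  have below: "(\<Sum>i\<in>{1..m-1}. x i * pd i (CK m q) x) = (\<Sum>i\<in>{1..m-1}. x i * CK m (pd i q) x)"
  proof (rule sum.cong)
    fix i assume "i \<in> {1..m-1}"
    then have "i \<noteq> m" by auto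
    with assms show "x i * pd i (CK m q) x = x i * CK m (pd i q) x" by (simp add: pd_CK_other)
  qed simp
  have shifted: "(\<Sum>i\<in>{1..m-1}. (x i - x m) * CK m (pd i q) x)
      = CK m (\<lambda>x. \<Sum>i\<in>{1..m-1}. x i * pd i q x) x"
    unfolding CK_def by (intro sum.cong) auto
  have "K0 \<nu> {1..m} (CK m q) x = (\<Sum>i\<in>{1..m-1}. x i * CK m (pd i q) x) + x m * pd m (CK m q) x
      + (\<Sum>i\<in>{1..m-1}. \<nu> i) * CK m q x + \<nu> m * CK m q x"
    unfolding K0_def top sum.insert[OF finite_atLeastAtMost top(2)] below
    by (simp add: algebra_simps)
  also have "\<dots> = (\<Sum>i\<in>{1..m-1}. (x i - x m) * CK m (pd i q) x)
      + x m * CK m (pd m q) x + (\<Sum>i\<in>{1..m-1}. \<nu> i) * CK m q x + \<nu> m * CK m q x"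
    using assms by (simp add: pd_CK algebra_simps sum_subtractf sum_distrib_left)
  also have "\<dots> = CK m (K0 \<nu> {1..m-1} q) x + x m * CK m (pd m q) x + \<nu> m * CK m q x"
    unfolding shifted by (simp add: K0_def)
  finally show "K0 \<nu> {1..m} (CK m q) x =
    CK m (K0 \<nu> {1..m-1} q) x + x m * CK m (pd m q) x + \<nu> m * CK m q x" .
qed

lemma Cas_CK_Kplus_power:
  assumes "f \<in> polyfun" "l < m" "Cas \<nu> {1..l} f = (\<lambda>x. c * f x)"
  shows "Cas \<nu> {1..l} (CK m ((Kplus \<nu> {1..m-1} ^^ n) f)) =
    (\<lambda>x. c * CK m ((Kplus \<nu> {1..m-1} ^^ n) f) x)"
proof -
  have "Cas \<nu> {1..l} (CK m ((Kplus \<nu> {1..m-1} ^^ n) f)) =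
      CK m (Cas \<nu> {1..l} ((Kplus \<nu> {1..m-1} ^^ n) f))"
    using assms by (intro Cas_CK) auto
  also have "Cas \<nu> {1..l} ((Kplus \<nu> {1..m-1} ^^ n) f) = (\<lambda>x. c * (Kplus \<nu> {1..m-1} ^^ n) f x)"
    using assms by (intro Cas_Kplus_power) auto
  finally show ?thesis by simp
qed

lemma CK_lowest_weight:
  assumes "q \<in> polyfun" "m \<ge> 1" "\<And>p. p \<ge> m \<Longrightarrow> pd p q = (\<lambda>x. 0)"
    and "K0 \<nu> {1..m-1} q = (\<lambda>x. c * q x)"
  shows "\<And>p. p > m \<Longrightarrow> pd p (CK m q) = (\<lambda>x. 0)"
    and "K0 \<nu> {1..m} (CK m q) = (\<lambda>x. (c + \<nu> m) * CK m q x)"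
    and "Cas \<nu> {1..m} (CK m q) = (\<lambda>x. (c + \<nu> m) * (c + \<nu> m - 1) * CK m q x)"
proof -
  show "pd p (CK m q) = (\<lambda>x. 0)" if "p > m" for p
    using that assms by (simp add: pd_CK_other)
  have "pd m q = (\<lambda>x. 0)" using assms by simp
  then show K0: "K0 \<nu> {1..m} (CK m q) = (\<lambda>x. (c + \<nu> m) * CK m q x)"
    unfolding K0_CK_top[OF assms(1,2)] using assms by (simp add: algebra_simps)
  have "Kminus {1..m} (CK m q) = (\<lambda>x. 0)"
    unfolding Kminus_CK_top[OF assms(1,2)] \<open>pd m q = (\<lambda>x. 0)\<close> by simp
  with K0 show "Cas \<nu> {1..m} (CK m q) = (\<lambda>x. (c + \<nu> m) * (c + \<nu> m - 1) * CK m q x)"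
    using assms by (intro Cas_lowest_weight) auto
qed

section \<open>Eigenvalues of the nested vectors\<close>

(* weight \<nu> j l is the K_0^[l]-eigenvalue of psi; C_[l] then acts by weight (weight - 1). *)
definition weight :: "(nat \<Rightarrow> real) \<Rightarrow> (nat \<Rightarrow> nat) \<Rightarrow> nat \<Rightarrow> real" where
  "weight \<nu> j l = (\<Sum>i=1..l-1. real (j i)) + (\<Sum>i=1..l. \<nu> i)"

lemma weight_Suc: "l \<ge> 1 \<Longrightarrow> weight \<nu> j (Suc l) = weight \<nu> j l + real (j l) + \<nu> (Suc l)"
  by (cases l) (simp_all add: weight_def)

lemma K0_var_power: "K0 \<nu> {i} (\<lambda>x. x i ^ n) = (\<lambda>x. (real n + \<nu> i) * x i ^ n)"
proof
  fix x
  have "x i * (real n * x i ^ (n - 1)) = real n * x i ^ n"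
    by (cases n) auto
  then show "K0 \<nu> {i} (\<lambda>x. x i ^ n) x = (real n + \<nu> i) * x i ^ n"
    by (simp add: K0_def pd_power algebra_simps)
qed

lemma psiS_eigen:
  "psiS \<nu> j r \<in> polyfun
   \<and> (\<forall>p > r + 2. pd p (psiS \<nu> j r) = (\<lambda>x. 0))
   \<and> K0 \<nu> {1..r+2} (psiS \<nu> j r) = (\<lambda>x. weight \<nu> j (r+2) * psiS \<nu> j r x)
   \<and> (\<forall>l \<in> {2..r+2}. Cas \<nu> {1..l} (psiS \<nu> j r) =
        (\<lambda>x. weight \<nu> j l * (weight \<nu> j l - 1) * psiS \<nu> j r x))"
proof (induction r)
  case 0
  let ?q = "\<lambda>x. x 1 ^ j 1"
  have "K0 \<nu> {1..2-1} ?q = (\<lambda>x. (real (j 1) + \<nu> 1) * ?q x)"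
    using K0_var_power by simp
  moreover have "\<And>p. p \<ge> 2 \<Longrightarrow> pd p ?q = (\<lambda>x. 0)"
    by (simp add: pd_power)
  moreover have "weight \<nu> j 2 = real (j 1) + \<nu> 1 + \<nu> 2"
    by (simp add: weight_def numeral_2_eq_2)
  ultimately show ?case
    unfolding add_0 psiS.simps(1) using CK_lowest_weight[of ?q 2 \<nu> "real (j 1) + \<nu> 1"] by simp
next
  case (Suc r)
  let ?B = "{1..r+2}"
  let ?q = "(Kplus \<nu> ?B ^^ j (r+2)) (psiS \<nu> j r)"
  have psi: "psiS \<nu> j r \<in> polyfun" using Suc.IH by blast
  have q: "?q \<in> polyfun" using psi by blast
  have "pd p ?q = (\<lambda>x. 0)" if "p \<ge> r + 3" for p
    using Suc.IH that by (intro pd_Kplus_power_outside) auto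
  moreover have "K0 \<nu> {1..r+3-1} ?q = (\<lambda>x. (weight \<nu> j (r+2) + real (j (r+2))) * ?q x)"
    using Suc.IH by (simp add: K0_Kplus_power)
  moreover have "weight \<nu> j (r+3) = weight \<nu> j (r+2) + real (j (r+2)) + \<nu> (r+3)"
    using weight_Suc[of "r+2" \<nu> j] by (simp add: numeral_3_eq_3)
  ultimately have top: "\<forall>p > r + 3. pd p (CK (r+3) ?q) = (\<lambda>x. 0)"
      "K0 \<nu> {1..r+3} (CK (r+3) ?q) = (\<lambda>x. weight \<nu> j (r+3) * CK (r+3) ?q x)"
      "Cas \<nu> {1..r+3} (CK (r+3) ?q) =
        (\<lambda>x. weight \<nu> j (r+3) * (weight \<nu> j (r+3) - 1) * CK (r+3) ?q x)"
    using CK_lowest_weight[OF q, of "r+3" \<nu> "weight \<nu> j (r+2) + real (j (r+2))"] by auto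
  have "Cas \<nu> {1..l} (CK (r+3) ?q) =
      (\<lambda>x. weight \<nu> j l * (weight \<nu> j l - 1) * CK (r+3) ?q x)" if "l \<in> {2..r+2}" for l
    using Cas_CK_Kplus_power[of "psiS \<nu> j r" l "r+3"] Suc.IH psi that by simp
  with top q show ?case
    by (auto simp: numeral_3_eq_3 intro: le_SucE)
qed

theorem theorem3p4:
  fixes n k :: nat and \<nu> :: "nat \<Rightarrow> real" and j :: "nat \<Rightarrow> nat"
  assumes "n \<ge> 2"
    and "\<forall>i\<in>{1..n}. \<nu> i > 0"
    and "(\<Sum>i=1..n-1. j i) = k"
  shows "\<forall>l\<in>{2..n}.
    Cas \<nu> {1..l} (psiS \<nu> j (n - 2)) =
      (\<lambda>x. ((\<Sum>i=1..l-1. real (j i)) + (\<Sum>i=1..l. \<nu> i))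
          * (-1 + (\<Sum>i=1..l-1. real (j i)) + (\<Sum>i=1..l. \<nu> i))
          * psiS \<nu> j (n - 2) x)"
proof
  fix l assume "l \<in> {2..n}"
  with assms(1) have "Cas \<nu> {1..l} (psiS \<nu> j (n - 2)) =
      (\<lambda>x. weight \<nu> j l * (weight \<nu> j l - 1) * psiS \<nu> j (n - 2) x)"
    using psiS_eigen[of \<nu> j "n - 2"] by auto
  then show "Cas \<nu> {1..l} (psiS \<nu> j (n - 2)) =
      (\<lambda>x. ((\<Sum>i=1..l-1. real (j i)) + (\<Sum>i=1..l. \<nu> i))
          * (-1 + (\<Sum>i=1..l-1. real (j i)) + (\<Sum>i=1..l. \<nu> i))
          * psiS \<nu> j (n - 2) x)"
    by (simp add: weight_def algebra_simps)
qed

end
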